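(* The functional $\Phi$ is continuous on $(\widetilde{\mathcal X},\mathbf D)$.
   Context: Fix $d\ge1$, $\beta>0$, $\phi\ge0$ smooth, spherically symmetric, supported in $B_{1/2}(0)$, $\int\phi=1$, and $V=\phi\star\phi$. Space $\widetilde{\mathcal X}$: $\mathcal M_{\le1}$ = subprobability measures on $\mathbb{R}^d$; orbit $\widetilde\alpha=\{\alpha\star\delta_x:x\in\mathbb{R}^d\}$. $\widetilde{\mathcal X}$ = all empty, finite or countable collections $\xi=\{\widetilde\alpha_i\}_{i\in I}$ of orbits with $\sum_i\alpha_i(\mathbb{R}^d)\le1$. For $k\ge2$, $\mathcal H_k$ = continuous translation-invariant $h:(\mathbb{R}^d)^k\to\mathbb{R}$ with $h\to0$ as $\sup_{i\ne j}|x_i-x_j|\to\infty$; $L(h,\xi)=\sum_{\widetilde\alpha\in\xi}\int h\,\mathrm{d}\alpha^{\otimes k}$; with a countable family $h_r\in\mathcal H_{k_r}$ dense in each $\mathcal H_k$, $\mathbf D(\xi_1,\xi_2)=\sum_r2^{-r}(1+\|h_r\|_\infty)^{-1}|L(h_r,\xi_1)-L(h_r,\xi_2)|$. Define $\Phi(\xi)=\frac{\beta^2}{2}V(0)\Big(1-\frac1{V(0)}\sum_{i\in I}\int_{\mathbb{R}^{2d}}V(x_2-x_1)\alpha_i(\mathrm{d}x_1)\alpha_i(\mathrm{d}x_2)\Big)$ for $\xi=(\widetilde\alpha_i)_{i\in I}$. *)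

theory Defs
  imports "HOL-Analysis.Analysis"
begin

text \<open>C-infinity: f lies in a family of everywhere (Frechet) differentiable functions
  closed under taking partial derivatives in all coordinate directions.\<close>
definition smooth_fun :: "('a::euclidean_space \<Rightarrow> real) \<Rightarrow> bool" where
  "smooth_fun f \<longleftrightarrow> (\<exists>F. f \<in> F \<and> (\<forall>g\<in>F. (\<forall>x. g differentiable (at x)) \<and>
      (\<forall>b\<in>Basis. (\<lambda>x. frechet_derivative g (at x) b) \<in> F)))"

definition admissible_phi :: "('a::euclidean_space \<Rightarrow> real) \<Rightarrow> bool" where
  "admissible_phi \<phi> \<longleftrightarrow> smooth_fun \<phi> \<and> (\<forall>x. \<phi> x \<ge> 0)
     \<and> (\<forall>x y. norm x = norm y \<longrightarrow> \<phi> x = \<phi> y)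
     \<and> (\<forall>x. norm x \<ge> 1/2 \<longrightarrow> \<phi> x = 0)
     \<and> (\<phi> has_integral 1) UNIV"

definition conv_self :: "('a::euclidean_space \<Rightarrow> real) \<Rightarrow> 'a \<Rightarrow> real" where
  "conv_self \<phi> x = integral UNIV (\<lambda>y. \<phi> y * \<phi> (x - y))"

definition subprob_meas :: "'a::euclidean_space measure \<Rightarrow> bool" where
  "subprob_meas \<alpha> \<longleftrightarrow> sets \<alpha> = sets borel \<and> emeasure \<alpha> UNIV \<le> 1"

definition translate_meas :: "'a::euclidean_space measure \<Rightarrow> 'a \<Rightarrow> 'a measure" where
  "translate_meas \<alpha> x = distr \<alpha> borel (\<lambda>y. y + x)"

definition orbit :: "'a::euclidean_space measure \<Rightarrow> 'a measure set" where
  "orbit \<alpha> = {translate_meas \<alpha> x | x. True}"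

definition is_orbit :: "'a::euclidean_space measure set \<Rightarrow> bool" where
  "is_orbit S \<longleftrightarrow> (\<exists>\<alpha>. subprob_meas \<alpha> \<and> S = orbit \<alpha>)"

text \<open>A representative of an orbit (all quantities used are translation invariant).\<close>
definition orb_rep :: "'a measure set \<Rightarrow> 'a measure" where
  "orb_rep S = (SOME \<alpha>. \<alpha> \<in> S)"

text \<open>An element of X-tilde: a countable indexed family of orbits, indexed by I \<subseteq> nat.\<close>
type_synonym 'a Xelem = "nat set \<times> (nat \<Rightarrow> 'a measure set)"

definition Xtilde :: "'a::euclidean_space Xelem set" where
  "Xtilde = {(I, \<xi>). (\<forall>i\<in>I. is_orbit (\<xi> i)) \<and>
              (\<Sum>\<^sub>\<infinity>i\<in>I. emeasure (orb_rep (\<xi> i)) UNIV) \<le> 1}"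

abbreviation cube :: "nat \<Rightarrow> (nat \<Rightarrow> 'a) set" where
  "cube k \<equiv> PiE {..<k} (\<lambda>_. UNIV)"

definition Hk :: "nat \<Rightarrow> ((nat \<Rightarrow> 'a::euclidean_space) \<Rightarrow> real) \<Rightarrow> bool" where
  "Hk k h \<longleftrightarrow> continuous_on (cube k) h
     \<and> (\<forall>x\<in>cube k. \<forall>y. h (\<lambda>i\<in>{..<k}. x i + y) = h x)
     \<and> (\<forall>\<epsilon>>0. \<exists>R. \<forall>x\<in>cube k. (\<exists>i<k. \<exists>j<k. R < dist (x i) (x j)) \<longrightarrow> \<bar>h x\<bar> < \<epsilon>)"

definition supn :: "nat \<Rightarrow> ((nat \<Rightarrow> 'a) \<Rightarrow> real) \<Rightarrow> real" where
  "supn k h = (SUP x\<in>cube k. \<bar>h x\<bar>)"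

definition Lfun :: "nat \<Rightarrow> ((nat \<Rightarrow> 'a::euclidean_space) \<Rightarrow> real) \<Rightarrow> 'a Xelem \<Rightarrow> real" where
  "Lfun k h \<xi> = (\<Sum>\<^sub>\<infinity>i\<in>fst \<xi>. (\<integral>x. h x \<partial>(PiM {..<k} (\<lambda>_. orb_rep (snd \<xi> i)))))"

definition dense_family :: "(nat \<Rightarrow> nat \<times> ((nat \<Rightarrow> 'a::euclidean_space) \<Rightarrow> real)) \<Rightarrow> bool" where
  "dense_family hs \<longleftrightarrow> (\<forall>r. 2 \<le> fst (hs r) \<and> Hk (fst (hs r)) (snd (hs r)))
     \<and> (\<forall>k\<ge>2. \<forall>h. Hk k h \<longrightarrow> (\<forall>\<epsilon>>0. \<exists>r. fst (hs r) = k \<and>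
            supn k (\<lambda>x. h x - snd (hs r) x) < \<epsilon>))"

definition Dmet :: "(nat \<Rightarrow> nat \<times> ((nat \<Rightarrow> 'a::euclidean_space) \<Rightarrow> real)) \<Rightarrow> 'a Xelem \<Rightarrow> 'a Xelem \<Rightarrow> real" where
  "Dmet hs \<xi>1 \<xi>2 = (\<Sum>r. (1/2)^(Suc r) / (1 + supn (fst (hs r)) (snd (hs r)))
        * \<bar>Lfun (fst (hs r)) (snd (hs r)) \<xi>1 - Lfun (fst (hs r)) (snd (hs r)) \<xi>2\<bar>)"

definition Phi :: "real \<Rightarrow> ('a::euclidean_space \<Rightarrow> real) \<Rightarrow> 'a Xelem \<Rightarrow> real" where
  "Phi \<beta> V \<xi> = \<beta>^2 / 2 * V 0 * (1 - 1 / V 0 *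
      (\<Sum>\<^sub>\<infinity>i\<in>fst \<xi>. (\<integral>x2. (\<integral>x1. V (x2 - x1) \<partial>(orb_rep (snd \<xi> i))) \<partial>(orb_rep (snd \<xi> i)))))"

end

theory Submission
  imports Defs
begin

text \<open>
  By Fubini, \<open>\<Phi>(\<xi>) = \<beta>\<^sup>2/2 (V(0) - L(h\<^sub>0, \<xi>))\<close> for the two-point function
  \<open>h\<^sub>0(x\<^sub>1, x\<^sub>2) = V(x\<^sub>1 - x\<^sub>2)\<close>, which lies in \<open>\<H>\<^sub>2\<close> because \<open>V = \<phi> \<star> \<phi>\<close> is continuous with
  compact support. Since the orbits of \<open>\<xi>\<close> carry total mass at most one,
  \<open>|L(h, \<xi>)| \<le> \<parallel>h\<parallel>\<^sub>\<infinity>\<close>; and \<open>\<D>(\<xi>, \<eta>)\<close> dominates a positive multiple of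
  \<open>|L(h\<^sub>r, \<xi>) - L(h\<^sub>r, \<eta>)|\<close> for each member \<open>h\<^sub>r\<close> of the dense family. Approximating
  \<open>h \<in> \<H>\<^sub>k\<close> uniformly by some \<open>h\<^sub>r\<close> therefore makes \<open>L(h, \<cdot>)\<close>, and hence \<open>\<Phi>\<close>, continuous.
\<close>

section \<open>Subprobability measures and their finite powers\<close>

lemma subprob_measD:
  assumes "subprob_meas (\<alpha>::'a::euclidean_space measure)"
  shows "finite_measure \<alpha>" "space \<alpha> = UNIV" "measure \<alpha> UNIV \<le> 1"
    "emeasure \<alpha> UNIV = ennreal (measure \<alpha> UNIV)"
proof -
  show sp: "space \<alpha> = UNIV" using assms unfolding subprob_meas_def
    by (metis sets_eq_imp_space_eq space_borel)
  have le: "emeasure \<alpha> UNIV \<le> 1" using assms unfolding subprob_meas_def by auto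
  have "emeasure \<alpha> (space \<alpha>) \<noteq> \<infinity>" using le_less_trans[OF le ennreal_one_less_top] sp by simp
  then show fm: "finite_measure \<alpha>" by (rule finite_measureI)
  show "emeasure \<alpha> UNIV = ennreal (measure \<alpha> UNIV)"
    using finite_measure.emeasure_eq_measure[OF fm] sp by simp
  then show "measure \<alpha> UNIV \<le> 1" using le by simp
qed

lemma cube_nonempty: "(\<lambda>i. undefined) \<in> cube k"
  by (simp add: PiE_iff extensional_def)

lemma borel_measurable_PiM_continuous_on_cube:
  fixes \<alpha> :: "'a::euclidean_space measure" and g :: "(nat \<Rightarrow> 'a) \<Rightarrow> real"
  assumes sets: "sets \<alpha> = sets borel" and g: "continuous_on (cube k) g"
  shows "g \<in> borel_measurable (PiM {..<k} (\<lambda>_. \<alpha>))"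
proof -
  let ?P = "PiM {..<k} (\<lambda>_. \<alpha>)"
  have "space \<alpha> = UNIV" using sets by (metis sets_eq_imp_space_eq space_borel)
  then have space_P: "space ?P = cube k" unfolding space_PiM by simp
  have coordinate: "(\<lambda>\<omega>. \<omega> i) \<in> measurable ?P (borel :: 'a measure)" for i
  proof (cases "i < k")
    case True
    have "(\<lambda>\<omega>. \<omega> i) \<in> measurable ?P \<alpha>"
      by (rule measurable_component_singleton) (use True in auto)
    then show ?thesis using measurable_cong_sets[OF refl sets] by blast
  next
    case False
    then have "\<omega> i = undefined" if "\<omega> \<in> space ?P" for \<omega>
      using that unfolding space_P by (auto simp: PiE_iff extensional_def)
    then show ?thesis using measurable_cong[of ?P "\<lambda>\<omega>. \<omega> i" "\<lambda>\<omega>. undefined"] by auto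
  qed
  have "(\<lambda>\<omega> i. \<omega> i) \<in> measurable ?P (PiM UNIV (\<lambda>_. borel :: 'a measure))"
    by (rule measurable_PiM_single') (use coordinate in auto)
  also have "measurable ?P (PiM UNIV (\<lambda>_. borel :: 'a measure)) = measurable ?P (borel :: (nat \<Rightarrow> 'a) measure)"
    by (rule measurable_cong_sets[OF refl sets_PiM_equal_borel])
  finally have "(\<lambda>\<omega>. \<omega>) \<in> measurable ?P (borel :: (nat \<Rightarrow> 'a) measure)" .
  then have "(\<lambda>\<omega>. \<omega>) \<in> measurable ?P (restrict_space borel (cube k))"
    by (rule measurable_restrict_space2[rotated]) (simp add: space_P)
  from measurable_comp[OF this borel_measurable_continuous_on_restrict[OF g]]
  show ?thesis by (simp add: comp_def)
qed

lemma PiM_subprob_bounded_integral: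
  fixes \<alpha> :: "'a::euclidean_space measure" and g :: "(nat \<Rightarrow> 'a) \<Rightarrow> real"
  assumes \<alpha>: "subprob_meas \<alpha>" and k: "k \<ge> 1"
    and g: "g \<in> borel_measurable (PiM {..<k} (\<lambda>_. \<alpha>))"
    and bound: "\<forall>x\<in>cube k. \<bar>g x\<bar> \<le> B"
  shows "integrable (PiM {..<k} (\<lambda>_. \<alpha>)) g"
    and "\<bar>\<integral>x. g x \<partial>(PiM {..<k} (\<lambda>_. \<alpha>))\<bar> \<le> B * measure \<alpha> UNIV"
proof -
  note \<alpha>_props = subprob_measD[OF \<alpha>]
  interpret \<alpha>: finite_measure \<alpha> by (rule \<alpha>_props(1))
  let ?P = "PiM {..<k} (\<lambda>_. \<alpha>)"
  have space_P: "space ?P = cube k" unfolding space_PiM \<alpha>_props(2) ..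
  have "emeasure ?P (space ?P) = (\<Prod>i\<in>{..<k}. emeasure \<alpha> UNIV)"
    unfolding space_P
    by (rule product_sigma_finite.emeasure_PiM)
      (auto simp: product_sigma_finite_def \<alpha>.sigma_finite_measure_axioms \<alpha>_props(2)[symmetric])
  also have "\<dots> = ennreal (measure \<alpha> UNIV ^ k)"
    unfolding \<alpha>_props(4) by (simp add: prod_ennreal ennreal_power)
  finally have emeasure_P: "emeasure ?P (space ?P) = ennreal (measure \<alpha> UNIV ^ k)" .
  interpret P: finite_measure ?P
    by (rule finite_measureI) (simp add: emeasure_P)
  have B: "0 \<le> B" using bound cube_nonempty[of k] by fastforce
  show int: "integrable ?P g"
    by (rule P.integrable_const_bound[where B=B]) (use bound space_P g in auto)
  have "\<bar>\<integral>x. g x \<partial>?P\<bar> \<le> (\<integral>x. \<bar>g x\<bar> \<partial>?P)"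
    by (rule integral_abs_bound)
  also have "\<dots> \<le> (\<integral>x. B \<partial>?P)"
    by (rule integral_mono) (use int bound space_P in auto)
  also have "\<dots> = B * measure \<alpha> UNIV ^ k"
    using emeasure_P P.emeasure_eq_measure by simp
  also have "\<dots> \<le> B * measure \<alpha> UNIV"
    by (intro mult_left_mono B power_decreasing[of 1 k, simplified]) (use k \<alpha>_props(3) in auto)
  finally show "\<bar>\<integral>x. g x \<partial>?P\<bar> \<le> B * measure \<alpha> UNIV" .
qed

section \<open>The test functions \<open>\<H>\<^sub>k\<close>\<close>

lemma supn_upper:
  assumes "\<forall>x\<in>cube k. \<bar>h x\<bar> \<le> B"
  shows "\<forall>x\<in>cube k. \<bar>h x\<bar> \<le> supn k h"
  using assms cSUP_upper[of _ "cube k" "\<lambda>x. \<bar>h x\<bar>"] unfolding supn_def bdd_above_def by blast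

lemma supn_nonneg:
  assumes "\<forall>x\<in>cube k. \<bar>h x\<bar> \<le> B"
  shows "0 \<le> supn k h"
  using supn_upper[OF assms] cube_nonempty[of k] by force

lemma Hk_continuous: "Hk k h \<Longrightarrow> continuous_on (cube k) h"
  unfolding Hk_def by (rule conjunct1)

lemma Hk_bounded:
  fixes h :: "(nat \<Rightarrow> 'a::euclidean_space) \<Rightarrow> real"
  assumes H: "Hk k h" and k: "k \<ge> 1"
  shows "\<exists>B. \<forall>x\<in>cube k. \<bar>h x\<bar> \<le> B"
proof -
  have cont: "continuous_on (cube k) h"
    and shift: "\<forall>x\<in>cube k. \<forall>y. h (\<lambda>i\<in>{..<k}. x i + y) = h x"
    and decay: "\<forall>\<epsilon>>0. \<exists>R. \<forall>x\<in>cube k. (\<exists>i<k. \<exists>j<k. R < dist (x i) (x j)) \<longrightarrow> \<bar>h x\<bar> < \<epsilon>"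
    using H unfolding Hk_def by auto
  obtain R where R: "\<forall>x\<in>cube k. (\<exists>i<k. \<exists>j<k. R < dist (x i) (x j)) \<longrightarrow> \<bar>h x\<bar> < 1"
    using decay by (meson zero_less_one)
  \<comment> \<open>Every configuration of diameter at most \<open>R\<close> is a translate of a point of the compact set \<open>K\<close>.\<close>
  define K where "K = PiE UNIV (\<lambda>i::nat. if i < k then cball (0::'a) R else {undefined})"
  have "compactin (product_topology (\<lambda>_. euclidean) UNIV) K"
    unfolding K_def compactin_PiE by auto
  then have "compact K" unfolding euclidean_product_topology by simp
  moreover have K_cube: "K \<subseteq> cube k"
    unfolding K_def by (auto simp: PiE_iff extensional_def) (metis singletonD)
  ultimately have "compact (h ` K)"
    by (intro compact_continuous_image continuous_on_subset[OF cont])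
  then obtain B where B: "\<forall>y\<in>h ` K. \<bar>y\<bar> \<le> B"
    using compact_imp_bounded bounded_real by metis
  show ?thesis
  proof (intro exI[of _ "max B 1"] ballI)
    fix x :: "nat \<Rightarrow> 'a" assume x: "x \<in> cube k"
    show "\<bar>h x\<bar> \<le> max B 1"
    proof (cases "\<exists>i<k. \<exists>j<k. R < dist (x i) (x j)")
      case True then show ?thesis using R x by force
    next
      case False
      define x' where "x' = (\<lambda>i\<in>{..<k}. x i + - x 0)"
      have "x' i \<in> (if i < k then cball 0 R else {undefined})" for i
        using False k by (cases "i < k") (force simp: x'_def dist_norm norm_minus_commute)+
      then have "x' \<in> K" by (simp add: K_def PiE_iff)
      moreover have "h x' = h x" unfolding x'_def using shift x by blast
      ultimately show ?thesis using B by force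
    qed
  qed
qed

section \<open>The metric \<open>\<D>\<close> and the functionals \<open>L(h, \<cdot>)\<close>\<close>

lemma orb_rep_subprob:
  assumes "is_orbit (S :: 'a::euclidean_space measure set)"
  shows "subprob_meas (orb_rep S)"
proof -
  obtain \<alpha> where \<alpha>: "subprob_meas \<alpha>" and S: "S = orbit \<alpha>"
    using assms unfolding is_orbit_def by blast
  have "translate_meas \<alpha> 0 \<in> S" unfolding S orbit_def by blast
  then have "orb_rep S \<in> S" unfolding orb_rep_def by (rule someI)
  then obtain x where x: "orb_rep S = distr \<alpha> borel (\<lambda>y. y + x)"
    unfolding S orbit_def translate_meas_def by blast
  have "(\<lambda>y. y + x) \<in> measurable \<alpha> borel"
    using \<alpha> measurable_cong_sets[of \<alpha> borel borel borel]
    by (auto simp: subprob_meas_def intro: borel_measurable_continuous_onI continuous_intros)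
  then have "emeasure (orb_rep S) UNIV = emeasure \<alpha> UNIV"
    unfolding x using subprob_measD(2)[OF \<alpha>] by (simp add: emeasure_distr)
  then show ?thesis using \<alpha> unfolding subprob_meas_def x by simp
qed

lemma Xtilde_subprob:
  assumes "\<xi> \<in> Xtilde" "i \<in> fst \<xi>"
  shows "subprob_meas (orb_rep (snd \<xi> i) :: 'a::euclidean_space measure)"
  using assms by (cases \<xi>) (auto simp: Xtilde_def intro!: orb_rep_subprob)

lemma Xtilde_mass:
  assumes "\<xi> \<in> (Xtilde :: 'a::euclidean_space Xelem set)"
  shows "(\<lambda>i. measure (orb_rep (snd \<xi> i)) UNIV) summable_on fst \<xi>"
    and "(\<Sum>\<^sub>\<infinity>i\<in>fst \<xi>. measure (orb_rep (snd \<xi> i)) UNIV) \<le> 1"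
proof -
  let ?m = "\<lambda>i. measure (orb_rep (snd \<xi> i)) UNIV"
  let ?em = "\<lambda>i. emeasure (orb_rep (snd \<xi> i)) UNIV"
  have total: "(\<Sum>\<^sub>\<infinity>i\<in>fst \<xi>. ?em i) \<le> 1"
    using assms unfolding Xtilde_def by auto
  have finite_sums: "sum ?m F \<le> 1" if F: "finite F" "F \<subseteq> fst \<xi>" for F
  proof -
    have "ennreal (sum ?m F) = (\<Sum>i\<in>F. ennreal (?m i))"
      by (rule sum_ennreal[symmetric]) simp
    also have "\<dots> = (\<Sum>i\<in>F. ?em i)"
      using F subprob_measD(4)[OF Xtilde_subprob[OF assms]] by (intro sum.cong) auto
    also have "\<dots> \<le> (SUP G\<in>{G. finite G \<and> G \<subseteq> fst \<xi>}. (\<Sum>i\<in>G. ?em i))"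
      by (rule SUP_upper) (use F in auto)
    also have "\<dots> = (\<Sum>\<^sub>\<infinity>i\<in>fst \<xi>. ?em i)"
      by (rule nonneg_infsum_complete[symmetric]) simp
    also have "\<dots> \<le> 1" by (rule total)
    finally show ?thesis by simp
  qed
  show summable: "?m summable_on fst \<xi>"
    by (rule nonneg_bdd_above_summable_on) (use finite_sums in \<open>auto simp: bdd_above_def\<close>)
  show "infsum ?m (fst \<xi>) \<le> 1"
    by (rule infsum_le_finite_sums[OF summable]) (use finite_sums in auto)
qed

lemma Xtilde_component_integral:
  fixes g :: "(nat \<Rightarrow> 'a::euclidean_space) \<Rightarrow> real"
  assumes "\<xi> \<in> Xtilde" "i \<in> fst \<xi>" and k: "k \<ge> 1"
    and g: "continuous_on (cube k) g" and bound: "\<forall>x\<in>cube k. \<bar>g x\<bar> \<le> B"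
  shows "integrable (PiM {..<k} (\<lambda>_. orb_rep (snd \<xi> i))) g"
    and "\<bar>\<integral>x. g x \<partial>(PiM {..<k} (\<lambda>_. orb_rep (snd \<xi> i)))\<bar> \<le> B * measure (orb_rep (snd \<xi> i)) UNIV"
proof -
  have \<alpha>: "subprob_meas (orb_rep (snd \<xi> i))" by (rule Xtilde_subprob[OF assms(1,2)])
  then have "sets (orb_rep (snd \<xi> i)) = sets borel" unfolding subprob_meas_def by simp
  note g_meas = borel_measurable_PiM_continuous_on_cube[OF this g]
  show "integrable (PiM {..<k} (\<lambda>_. orb_rep (snd \<xi> i))) g"
    and "\<bar>\<integral>x. g x \<partial>(PiM {..<k} (\<lambda>_. orb_rep (snd \<xi> i)))\<bar> \<le> B * measure (orb_rep (snd \<xi> i)) UNIV"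
    using PiM_subprob_bounded_integral[OF \<alpha> k g_meas bound] by blast+
qed

lemma Lfun_summable_and_bounded:
  fixes g :: "(nat \<Rightarrow> 'a::euclidean_space) \<Rightarrow> real"
  assumes \<xi>: "\<xi> \<in> Xtilde" and k: "k \<ge> 1"
    and g: "continuous_on (cube k) g" and bound: "\<forall>x\<in>cube k. \<bar>g x\<bar> \<le> B"
  shows "(\<lambda>i. \<integral>x. g x \<partial>(PiM {..<k} (\<lambda>_. orb_rep (snd \<xi> i)))) summable_on fst \<xi>"
    and "\<bar>Lfun k g \<xi>\<bar> \<le> B"
proof -
  let ?m = "\<lambda>i. measure (orb_rep (snd \<xi> i)) UNIV"
  let ?l = "\<lambda>i. \<integral>x. g x \<partial>(PiM {..<k} (\<lambda>_. orb_rep (snd \<xi> i)))"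
  note component = Xtilde_component_integral(2)[OF \<xi> _ k g bound]
  have B: "0 \<le> B" using bound cube_nonempty[of k] by fastforce
  have majorant: "(\<lambda>i. B * ?m i) summable_on fst \<xi>"
    by (rule summable_on_cmult_right[OF Xtilde_mass(1)[OF \<xi>]])
  have abs_summable: "(\<lambda>i. norm (?l i)) summable_on fst \<xi>"
    by (rule summable_on_comparison_test[OF majorant]) (use component in auto)
  then show "?l summable_on fst \<xi>" using summable_on_iff_abs_summable_on_real by blast
  have "\<bar>Lfun k g \<xi>\<bar> \<le> (\<Sum>\<^sub>\<infinity>i\<in>fst \<xi>. norm (?l i))"
    unfolding Lfun_def using norm_infsum_bound[of ?l "fst \<xi>"] abs_summable by simp
  also have "\<dots> \<le> (\<Sum>\<^sub>\<infinity>i\<in>fst \<xi>. B * ?m i)"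
    by (rule infsum_mono[OF abs_summable majorant]) (use component in auto)
  also have "\<dots> = B * (\<Sum>\<^sub>\<infinity>i\<in>fst \<xi>. ?m i)"
    by (rule infsum_cmult_right) (use Xtilde_mass(1)[OF \<xi>] in simp)
  also have "\<dots> \<le> B"
    using mult_left_mono[OF Xtilde_mass(2)[OF \<xi>] B] by simp
  finally show "\<bar>Lfun k g \<xi>\<bar> \<le> B" .
qed

lemma Lfun_diff:
  fixes g1 g2 :: "(nat \<Rightarrow> 'a::euclidean_space) \<Rightarrow> real"
  assumes \<xi>: "\<xi> \<in> Xtilde" and k: "k \<ge> 1"
    and g1: "continuous_on (cube k) g1" "\<forall>x\<in>cube k. \<bar>g1 x\<bar> \<le> B1"
    and g2: "continuous_on (cube k) g2" "\<forall>x\<in>cube k. \<bar>g2 x\<bar> \<le> B2"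
  shows "Lfun k g1 \<xi> - Lfun k g2 \<xi> = Lfun k (\<lambda>x. g1 x - g2 x) \<xi>"
proof -
  let ?P = "\<lambda>i. PiM {..<k} (\<lambda>_. orb_rep (snd \<xi> i))"
  note summable1 = Lfun_summable_and_bounded(1)[OF \<xi> k g1]
    and summable2 = summable_on_uminus[THEN iffD2, OF Lfun_summable_and_bounded(1)[OF \<xi> k g2]]
  have "Lfun k g1 \<xi> - Lfun k g2 \<xi>
      = (\<Sum>\<^sub>\<infinity>i\<in>fst \<xi>. \<integral>x. g1 x \<partial>?P i) + (\<Sum>\<^sub>\<infinity>i\<in>fst \<xi>. - (\<integral>x. g2 x \<partial>?P i))"
    unfolding Lfun_def infsum_uminus by simp
  also have "\<dots> = (\<Sum>\<^sub>\<infinity>i\<in>fst \<xi>. (\<integral>x. g1 x \<partial>?P i) + - (\<integral>x. g2 x \<partial>?P i))"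
    by (rule infsum_add[symmetric, OF summable1 summable2])
  also have "\<dots> = Lfun k (\<lambda>x. g1 x - g2 x) \<xi>"
    unfolding Lfun_def
  proof (rule infsum_cong)
    fix i assume "i \<in> fst \<xi>"
    then show "(\<integral>x. g1 x \<partial>?P i) + - (\<integral>x. g2 x \<partial>?P i) = (\<integral>x. g1 x - g2 x \<partial>?P i)"
      using Bochner_Integration.integral_diff[OF Xtilde_component_integral(1)[OF \<xi> _ k g1]
          Xtilde_component_integral(1)[OF \<xi> _ k g2]] by simp
  qed
  finally show ?thesis .
qed

lemma abs_Lfun_diff_le_supn:
  fixes g1 g2 :: "(nat \<Rightarrow> 'a::euclidean_space) \<Rightarrow> real"
  assumes \<xi>: "\<xi> \<in> Xtilde" and k: "k \<ge> 1"
    and g1: "continuous_on (cube k) g1" "\<forall>x\<in>cube k. \<bar>g1 x\<bar> \<le> B1"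
    and g2: "continuous_on (cube k) g2" "\<forall>x\<in>cube k. \<bar>g2 x\<bar> \<le> B2"
  shows "\<bar>Lfun k g1 \<xi> - Lfun k g2 \<xi>\<bar> \<le> supn k (\<lambda>x. g1 x - g2 x)"
proof -
  have "\<forall>x\<in>cube k. \<bar>g1 x - g2 x\<bar> \<le> B1 + B2" using g1(2) g2(2) by force
  then show ?thesis
    unfolding Lfun_diff[OF \<xi> k g1 g2]
    by (intro Lfun_summable_and_bounded(2)[OF \<xi> k] continuous_on_diff g1(1) g2(1) supn_upper)
qed

lemma dense_familyD:
  assumes "dense_family hs"
  shows "2 \<le> fst (hs r)" and "Hk (fst (hs r)) (snd (hs r))"
    and "\<lbrakk>k \<ge> 2; Hk k h; \<epsilon> > 0\<rbrakk> \<Longrightarrow> \<exists>r. fst (hs r) = k \<and> supn k (\<lambda>x. h x - snd (hs r) x) < \<epsilon>"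
  using assms unfolding dense_family_def by blast+

lemma Dmet_term_le:
  fixes hs :: "nat \<Rightarrow> nat \<times> ((nat \<Rightarrow> 'a::euclidean_space) \<Rightarrow> real)"
  assumes hs: "dense_family hs" and \<xi>: "\<xi> \<in> Xtilde" and \<eta>: "\<eta> \<in> Xtilde"
  shows "(1/2)^(Suc r) / (1 + supn (fst (hs r)) (snd (hs r)))
        * \<bar>Lfun (fst (hs r)) (snd (hs r)) \<xi> - Lfun (fst (hs r)) (snd (hs r)) \<eta>\<bar> \<le> Dmet hs \<xi> \<eta>"
proof -
  define t where "t = (\<lambda>r. (1/2)^(Suc r) / (1 + supn (fst (hs r)) (snd (hs r)))
        * \<bar>Lfun (fst (hs r)) (snd (hs r)) \<xi> - Lfun (fst (hs r)) (snd (hs r)) \<eta>\<bar>)"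
  have t_bounds: "0 \<le> t n \<and> t n \<le> (1/2)^n" for n
  proof -
    let ?k = "fst (hs n)" and ?h = "snd (hs n)"
    let ?s = "supn ?k ?h"
    have k: "1 \<le> ?k" using dense_familyD(1)[OF hs, of n] by simp
    note H = dense_familyD(2)[OF hs, of n]
    obtain B where "\<forall>x\<in>cube ?k. \<bar>?h x\<bar> \<le> B" using Hk_bounded[OF H k] by blast
    note s_upper = supn_upper[OF this] and s_nonneg = supn_nonneg[OF this]
    note h = Hk_continuous[OF H]
    have "\<bar>Lfun ?k ?h \<xi> - Lfun ?k ?h \<eta>\<bar> \<le> 2 * ?s"
      using Lfun_summable_and_bounded(2)[OF \<xi> k h s_upper]
        Lfun_summable_and_bounded(2)[OF \<eta> k h s_upper] by linarith
    then have "t n \<le> (1/2)^(Suc n) / (1 + ?s) * (2 * ?s)"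
      unfolding t_def by (rule mult_left_mono) (use s_nonneg in simp)
    also have "\<dots> = ((1/2)^(Suc n) * 2) * (?s / (1 + ?s))" by (simp only: divide_inverse mult_ac)
    also have "\<dots> = (1/2)^n * (?s / (1 + ?s))" by simp
    also have "\<dots> \<le> (1/2)^n"
      using s_nonneg by (intro mult_left_le) auto
    finally show ?thesis unfolding t_def using s_nonneg by simp
  qed
  have "summable t"
    by (rule summable_comparison_test[OF _ summable_geometric[of "1/2::real"]]) (use t_bounds in auto)
  then have "t r \<le> suminf t"
    using sum_le_suminf[of t "{r}"] t_bounds by simp
  then show ?thesis unfolding Dmet_def t_def .
qed

lemma Lfun_continuous_Dmet:
  fixes hs :: "nat \<Rightarrow> nat \<times> ((nat \<Rightarrow> 'a::euclidean_space) \<Rightarrow> real)"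
  assumes hs: "dense_family hs" and k: "k \<ge> 2" and H: "Hk k h"
    and \<xi>: "\<xi> \<in> Xtilde" and \<epsilon>: "\<epsilon> > 0"
  shows "\<exists>\<delta>>0. \<forall>\<eta>\<in>Xtilde. Dmet hs \<xi> \<eta> < \<delta> \<longrightarrow> \<bar>Lfun k h \<eta> - Lfun k h \<xi>\<bar> < \<epsilon>"
proof -
  have k1: "k \<ge> 1" using k by simp
  obtain r where r: "fst (hs r) = k" and approx: "supn k (\<lambda>x. h x - snd (hs r) x) < \<epsilon> / 3"
    using dense_familyD(3)[OF hs k H, of "\<epsilon> / 3"] \<epsilon> by auto
  define hr where "hr = snd (hs r)"
  have Hr: "Hk k hr" using dense_familyD(2)[OF hs, of r] unfolding hr_def r .
  obtain B where h: "continuous_on (cube k) h" "\<forall>x\<in>cube k. \<bar>h x\<bar> \<le> B"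
    using Hk_continuous[OF H] Hk_bounded[OF H k1] by blast
  obtain Br where hr: "continuous_on (cube k) hr" "\<forall>x\<in>cube k. \<bar>hr x\<bar> \<le> Br"
    using Hk_continuous[OF Hr] Hk_bounded[OF Hr k1] by blast
  define c where "c = (1/2::real)^(Suc r) / (1 + supn k hr)"
  have c: "c > 0" unfolding c_def using supn_nonneg[OF hr(2)] by simp
  show ?thesis
  proof (intro exI[of _ "c * (\<epsilon> / 3)"] conjI ballI impI)
    show "c * (\<epsilon> / 3) > 0" using c \<epsilon> by simp
    fix \<eta> assume \<eta>: "\<eta> \<in> Xtilde" and D: "Dmet hs \<xi> \<eta> < c * (\<epsilon> / 3)"
    have "c * \<bar>Lfun k hr \<xi> - Lfun k hr \<eta>\<bar> < c * (\<epsilon> / 3)"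
      using Dmet_term_le[OF hs \<xi> \<eta>, of r] D unfolding c_def hr_def r by linarith
    then have "\<bar>Lfun k hr \<xi> - Lfun k hr \<eta>\<bar> < \<epsilon> / 3" using c by simp
    moreover have approx_L: "\<bar>Lfun k h \<zeta> - Lfun k hr \<zeta>\<bar> < \<epsilon> / 3" if "\<zeta> \<in> Xtilde" for \<zeta>
      using abs_Lfun_diff_le_supn[OF that k1 h hr] approx unfolding hr_def by linarith
    ultimately show "\<bar>Lfun k h \<eta> - Lfun k h \<xi>\<bar> < \<epsilon>"
      using approx_L[OF \<xi>] approx_L[OF \<eta>] by linarith
  qed
qed

section \<open>The interaction potential and the functional \<open>\<Phi>\<close>\<close>

lemma admissible_phi_continuous:
  assumes "admissible_phi (\<phi> :: 'a::euclidean_space \<Rightarrow> real)"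
  shows "continuous_on UNIV \<phi>"
proof -
  have "smooth_fun \<phi>" using assms unfolding admissible_phi_def by simp
  then obtain F where "\<phi> \<in> F" "\<forall>g\<in>F. (\<forall>x. g differentiable (at x)) \<and>
      (\<forall>b\<in>Basis. (\<lambda>x. frechet_derivative g (at x) b) \<in> F)"
    unfolding smooth_fun_def by (elim exE conjE)
  then have "\<phi> differentiable (at x)" for x by simp
  then show ?thesis
    by (intro continuous_at_imp_continuous_on ballI differentiable_imp_continuous_within)
qed

lemma admissible_phi_vanishes:
  assumes "admissible_phi (\<phi> :: 'a::euclidean_space \<Rightarrow> real)"
  shows "\<forall>x. 1/2 \<le> norm x \<longrightarrow> \<phi> x = 0"
  using assms unfolding admissible_phi_def by blast

lemma conv_self_vanishes:
  fixes \<phi> :: "'a::euclidean_space \<Rightarrow> real"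
  assumes "\<forall>x. R \<le> norm x \<longrightarrow> \<phi> x = 0"
  shows "\<forall>x. 2 * R \<le> norm x \<longrightarrow> conv_self \<phi> x = 0"
proof (intro allI impI)
  fix x :: 'a assume x: "2 * R \<le> norm x"
  have "\<phi> y * \<phi> (x - y) = 0" for y
    using assms norm_triangle_sub[of x y] x by (cases "R \<le> norm y") auto
  then have "(\<lambda>y. \<phi> y * \<phi> (x - y)) = (\<lambda>y. 0)" by (rule ext)
  then show "conv_self \<phi> x = 0" unfolding conv_self_def by simp
qed

lemma continuous_conv_self:
  fixes \<phi> :: "'a::euclidean_space \<Rightarrow> real"
  assumes cont: "continuous_on UNIV \<phi>" and vanish: "\<forall>x. R \<le> norm x \<longrightarrow> \<phi> x = 0"
  shows "continuous_on UNIV (conv_self \<phi>)"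
proof -
  obtain a :: 'a where a: "cball 0 R \<subseteq> cbox (-a) a"
    using bounded_subset_cbox_symmetric[OF bounded_cball] by blast
  have "conv_self \<phi> x = integral (cbox (-a) a) (\<lambda>y. \<phi> y * \<phi> (x - y))" for x
  proof -
    have "(\<lambda>y. \<phi> y * \<phi> (x - y)) = (\<lambda>y. if y \<in> cbox (-a) a then \<phi> y * \<phi> (x - y) else 0)"
      using a vanish by (force simp: subset_iff)
    then show ?thesis unfolding conv_self_def by (simp add: integral_restrict_UNIV)
  qed
  moreover have "continuous_on (UNIV \<times> cbox (-a) a) (\<lambda>(x, y). \<phi> y * \<phi> (x - y))"
    unfolding case_prod_unfold
    by (intro continuous_on_mult continuous_on_compose2[OF cont] continuous_intros) auto
  then have "continuous_on UNIV (\<lambda>x. integral (cbox (-a) a) (\<lambda>y. \<phi> y * \<phi> (x - y)))"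
    by (rule integral_continuous_on_param)
  ultimately show ?thesis by simp
qed

lemma admissible_phi_conv_self:
  assumes "admissible_phi (\<phi> :: 'a::euclidean_space \<Rightarrow> real)"
  shows "continuous_on UNIV (conv_self \<phi>)" and "\<forall>x. 1 \<le> norm x \<longrightarrow> conv_self \<phi> x = 0"
  using continuous_conv_self[OF admissible_phi_continuous[OF assms] admissible_phi_vanishes[OF assms]]
    conv_self_vanishes[OF admissible_phi_vanishes[OF assms]] by simp_all

lemma continuous_vanishing_bounded:
  fixes V :: "'a::euclidean_space \<Rightarrow> real"
  assumes cont: "continuous_on UNIV V" and vanish: "\<forall>x. R \<le> norm x \<longrightarrow> V x = 0"
  shows "\<exists>B. \<forall>x. \<bar>V x\<bar> \<le> B"
proof -
  have "compact (V ` cball 0 R)"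
    by (rule compact_continuous_image[OF continuous_on_subset[OF cont]]) auto
  then obtain B where "\<forall>y\<in>V ` cball 0 R. \<bar>y\<bar> \<le> B"
    using compact_imp_bounded bounded_real by metis
  then have "\<bar>V x\<bar> \<le> max B 0" for x
    using vanish by (cases "R \<le> norm x") (auto simp: not_le intro: le_max_iff_disj[THEN iffD2])
  then show ?thesis by blast
qed

lemma continuous_on_difference_kernel:
  fixes V :: "'a::euclidean_space \<Rightarrow> real"
  assumes "continuous_on UNIV V"
  shows "continuous_on S (\<lambda>x::nat \<Rightarrow> 'a. V (x 0 - x 1))"
proof -
  have "continuous_on UNIV (\<lambda>x::nat \<Rightarrow> 'a. x 0 - x 1)"
    by (intro continuous_on_diff continuous_on_product_coordinates)
  then show ?thesis
    by (rule continuous_on_compose2[OF assms continuous_on_subset]) auto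
qed

lemma Hk_difference_kernel:
  fixes V :: "'a::euclidean_space \<Rightarrow> real"
  assumes cont: "continuous_on UNIV V" and vanish: "\<forall>x. R \<le> norm x \<longrightarrow> V x = 0"
  shows "Hk 2 (\<lambda>x::nat \<Rightarrow> 'a. V (x 0 - x 1))"
  unfolding Hk_def
proof (intro conjI continuous_on_difference_kernel[OF cont] allI impI)
  fix \<epsilon> :: real assume \<epsilon>: "\<epsilon> > 0"
  show "\<exists>R. \<forall>x\<in>cube 2. (\<exists>i<2. \<exists>j<2. R < dist (x i) (x j)) \<longrightarrow> \<bar>V (x 0 - x 1)\<bar> < \<epsilon>"
  proof (intro exI[of _ R] ballI impI)
    fix x :: "nat \<Rightarrow> 'a" assume "\<exists>i<2. \<exists>j<2. R < dist (x i) (x j)"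
    then obtain i j where "i < 2" "j < 2" "R < dist (x i) (x j)" by blast
    then have "R < dist (x 0) (x 1)"
      by (auto simp: less_2_cases_iff dist_commute intro: less_le_trans[OF _ zero_le_dist])
    then have "V (x 0 - x 1) = 0" using vanish by (simp add: dist_norm)
    then show "\<bar>V (x 0 - x 1)\<bar> < \<epsilon>" using \<epsilon> by simp
  qed
qed simp

lemma integral_PiM_difference_kernel:
  fixes \<alpha> :: "'a::euclidean_space measure" and V :: "'a \<Rightarrow> real"
  assumes \<alpha>: "subprob_meas \<alpha>" and cont: "continuous_on UNIV V" and bound: "\<forall>x. \<bar>V x\<bar> \<le> B"
  shows "(\<integral>x. V (x 0 - x 1) \<partial>(PiM {..<2::nat} (\<lambda>_. \<alpha>))) = (\<integral>x2. (\<integral>x1. V (x2 - x1) \<partial>\<alpha>) \<partial>\<alpha>)"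
proof -
  interpret \<alpha>: finite_measure \<alpha> by (rule subprob_measD(1)[OF \<alpha>])
  interpret product_sigma_finite "\<lambda>_. \<alpha>"
    unfolding product_sigma_finite_def using \<alpha>.sigma_finite_measure_axioms by blast
  have sets: "sets \<alpha> = sets borel" using \<alpha> unfolding subprob_meas_def by simp
  have int: "integrable (PiM {..<2} (\<lambda>_. \<alpha>)) (\<lambda>x::nat \<Rightarrow> 'a. V (x 0 - x 1))"
    using bound
    by (intro PiM_subprob_bounded_integral(1)[OF \<alpha> _ borel_measurable_PiM_continuous_on_cube[OF sets]]
        continuous_on_difference_kernel[OF cont]) auto
  have two: "{..<2::nat} = insert 1 {0}" by auto
  have "(\<integral>x. V (x 0 - x 1) \<partial>(PiM {..<2::nat} (\<lambda>_. \<alpha>))) =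
      (\<integral>x. (\<integral>y. V ((x(1:=y)) 0 - (x(1:=y)) 1) \<partial>\<alpha>) \<partial>PiM {0::nat} (\<lambda>_. \<alpha>))"
    unfolding two by (rule product_integral_insert) (use int two in auto)
  also have "\<dots> = (\<integral>x. (\<lambda>t. \<integral>y. V (t - y) \<partial>\<alpha>) (x 0) \<partial>PiM {0::nat} (\<lambda>_. \<alpha>))"
    by simp
  also have "\<dots> = (\<integral>t. (\<integral>y. V (t - y) \<partial>\<alpha>) \<partial>\<alpha>)"
  proof (rule product_integral_singleton)
    have "(\<lambda>p::'a \<times> 'a. V (fst p - snd p)) \<in> borel_measurable (borel \<Otimes>\<^sub>M borel)"
      unfolding borel_prod
      by (intro borel_measurable_continuous_onI continuous_on_compose2[OF cont] continuous_intros) auto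
    then have "(\<lambda>p::'a \<times> 'a. V (fst p - snd p)) \<in> borel_measurable (\<alpha> \<Otimes>\<^sub>M \<alpha>)"
      using measurable_cong_sets[OF sets_pair_measure_cong[OF sets sets] refl] by blast
    then have "case_prod (\<lambda>t y. V (t - y)) \<in> borel_measurable (\<alpha> \<Otimes>\<^sub>M \<alpha>)"
      by (simp add: case_prod_unfold)
    then show "(\<lambda>t. \<integral>y. V (t - y) \<partial>\<alpha>) \<in> borel_measurable \<alpha>"
      by (rule \<alpha>.borel_measurable_lebesgue_integral)
  qed
  finally show ?thesis .
qed

lemma Phi_eq_Lfun_difference_kernel:
  fixes V :: "'a::euclidean_space \<Rightarrow> real"
  assumes cont: "continuous_on UNIV V" and bound: "\<forall>x. \<bar>V x\<bar> \<le> B" and \<xi>: "\<xi> \<in> Xtilde"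
  shows "Phi \<beta> V \<xi> = \<beta>^2 / 2 * V 0 * (1 - 1 / V 0 * Lfun 2 (\<lambda>x::nat \<Rightarrow> 'a. V (x 0 - x 1)) \<xi>)"
proof -
  have "(\<Sum>\<^sub>\<infinity>i\<in>fst \<xi>. (\<integral>x2. (\<integral>x1. V (x2 - x1) \<partial>orb_rep (snd \<xi> i)) \<partial>orb_rep (snd \<xi> i)))
      = Lfun 2 (\<lambda>x::nat \<Rightarrow> 'a. V (x 0 - x 1)) \<xi>"
    unfolding Lfun_def
    by (intro infsum_cong integral_PiM_difference_kernel[symmetric, OF _ cont bound]
        Xtilde_subprob[OF \<xi>])
  then show ?thesis unfolding Phi_def by simp
qed

lemma abs_Phi_diff_le:
  fixes V :: "'a::euclidean_space \<Rightarrow> real"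
  assumes cont: "continuous_on UNIV V" and bound: "\<forall>x. \<bar>V x\<bar> \<le> B"
    and \<xi>: "\<xi> \<in> Xtilde" and \<eta>: "\<eta> \<in> Xtilde"
  shows "\<bar>Phi \<beta> V \<eta> - Phi \<beta> V \<xi>\<bar>
    \<le> \<beta>^2 / 2 * \<bar>Lfun 2 (\<lambda>x::nat \<Rightarrow> 'a. V (x 0 - x 1)) \<eta> - Lfun 2 (\<lambda>x. V (x 0 - x 1)) \<xi>\<bar>"
proof -
  let ?L = "Lfun 2 (\<lambda>x::nat \<Rightarrow> 'a. V (x 0 - x 1))"
  show ?thesis
  proof (cases "V 0 = 0")
    case True
    then show ?thesis by (simp add: Phi_def)
  next
    case False
    then have "Phi \<beta> V \<eta> - Phi \<beta> V \<xi> = \<beta>^2 / 2 * (?L \<xi> - ?L \<eta>)"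
      unfolding Phi_eq_Lfun_difference_kernel[OF cont bound \<xi>]
        Phi_eq_Lfun_difference_kernel[OF cont bound \<eta>]
      by (simp add: field_simps)
    then have "\<bar>Phi \<beta> V \<eta> - Phi \<beta> V \<xi>\<bar> = \<bar>\<beta>^2 / 2\<bar> * \<bar>?L \<xi> - ?L \<eta>\<bar>"
      by (simp only: abs_mult)
    then show ?thesis by (simp add: abs_minus_commute)
  qed
qed

lemma eps_delta_continuous_if_dominated:
  fixes f g :: "'b \<Rightarrow> real"
  assumes c: "0 \<le> c" and dominated: "\<forall>\<eta>\<in>A. \<bar>f \<eta> - f \<xi>\<bar> \<le> c * \<bar>g \<eta> - g \<xi>\<bar>"
    and g: "\<forall>\<epsilon>>0. \<exists>\<delta>>0. \<forall>\<eta>\<in>A. d \<xi> \<eta> < \<delta> \<longrightarrow> \<bar>g \<eta> - g \<xi>\<bar> < \<epsilon>"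
  shows "\<forall>\<epsilon>>0. \<exists>\<delta>>0. \<forall>\<eta>\<in>A. d \<xi> \<eta> < \<delta> \<longrightarrow> \<bar>f \<eta> - f \<xi>\<bar> < \<epsilon>"
proof (intro allI impI)
  fix \<epsilon> :: real assume \<epsilon>: "\<epsilon> > 0"
  then obtain \<delta> where \<delta>: "\<delta> > 0" and close: "\<forall>\<eta>\<in>A. d \<xi> \<eta> < \<delta> \<longrightarrow> \<bar>g \<eta> - g \<xi>\<bar> < \<epsilon> / (c + 1)"
    using g c by (metis add_nonneg_pos divide_pos_pos zero_less_one)
  have "\<bar>f \<eta> - f \<xi>\<bar> < \<epsilon>" if "\<eta> \<in> A" "d \<xi> \<eta> < \<delta>" for \<eta>
  proof -
    have "\<bar>f \<eta> - f \<xi>\<bar> \<le> c * (\<epsilon> / (c + 1))"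
      using dominated close that c by (meson less_imp_le mult_left_mono order.trans)
    also have "\<dots> < \<epsilon>" using c \<epsilon> by (simp add: field_simps)
    finally show ?thesis .
  qed
  then show "\<exists>\<delta>>0. \<forall>\<eta>\<in>A. d \<xi> \<eta> < \<delta> \<longrightarrow> \<bar>f \<eta> - f \<xi>\<bar> < \<epsilon>"
    using \<delta> by blast
qed

theorem lemma2p3:
  fixes \<phi> :: "'a::euclidean_space \<Rightarrow> real" and \<beta> :: real
    and hs :: "nat \<Rightarrow> nat \<times> ((nat \<Rightarrow> 'a) \<Rightarrow> real)"
  assumes "\<beta> > 0" and "admissible_phi \<phi>" and "dense_family hs"
  shows "\<forall>\<xi>\<in>Xtilde. \<forall>\<epsilon>>0. \<exists>\<delta>>0. \<forall>\<eta>\<in>Xtilde.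
           Dmet hs \<xi> \<eta> < \<delta> \<longrightarrow> \<bar>Phi \<beta> (conv_self \<phi>) \<eta> - Phi \<beta> (conv_self \<phi>) \<xi>\<bar> < \<epsilon>"
proof
  fix \<xi> :: "'a Xelem" assume \<xi>: "\<xi> \<in> Xtilde"
  define V where "V = conv_self \<phi>"
  note V_cont = admissible_phi_conv_self(1)[OF assms(2), folded V_def]
    and V_vanish = admissible_phi_conv_self(2)[OF assms(2), folded V_def]
  obtain B where V_bound: "\<forall>x. \<bar>V x\<bar> \<le> B"
    using continuous_vanishing_bounded[OF V_cont V_vanish] by blast
  have L_cont: "\<forall>\<epsilon>>0. \<exists>\<delta>>0. \<forall>\<eta>\<in>Xtilde. Dmet hs \<xi> \<eta> < \<delta> \<longrightarrow>
      \<bar>Lfun 2 (\<lambda>x. V (x 0 - x 1)) \<eta> - Lfun 2 (\<lambda>x. V (x 0 - x 1)) \<xi>\<bar> < \<epsilon>"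
    using Lfun_continuous_Dmet[OF assms(3) order.refl Hk_difference_kernel[OF V_cont V_vanish] \<xi>]
    by blast
  show "\<forall>\<epsilon>>0. \<exists>\<delta>>0. \<forall>\<eta>\<in>Xtilde. Dmet hs \<xi> \<eta> < \<delta> \<longrightarrow>
      \<bar>Phi \<beta> (conv_self \<phi>) \<eta> - Phi \<beta> (conv_self \<phi>) \<xi>\<bar> < \<epsilon>"
    unfolding V_def[symmetric]
    by (rule eps_delta_continuous_if_dominated[where c = "\<beta>^2 / 2" and d = "Dmet hs"
          and g = "Lfun 2 (\<lambda>x. V (x 0 - x 1))", OF _ _ L_cont])
      (use abs_Phi_diff_le[OF V_cont V_bound \<xi>] in auto)
qed

end
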